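(* Let $P$ be a $\Sigma$-repeatable online minimization problem and let $c$ be a constant. Suppose that for every $\varepsilon>0$ and every $\alpha$ there exists an input distribution $p_{\alpha,\varepsilon}$ over $P$-inputs with finite support such that $\mathbb{E}_{\sigma\sim p_{\alpha,\varepsilon}}[D(\sigma)]\geq (c-\varepsilon)\,\mathbb{E}_{\sigma\sim p_{\alpha,\varepsilon}}[\mathrm{OPT}(\sigma)]+\alpha$ for every deterministic $P$-algorithm $D$ without advice. Then every randomized $P$-algorithm reading at most $o(n)$ bits of advice on inputs of length $n$ has a competitive ratio of at least $c$.
   Context: Online minimization problems and advice: an input is $\sigma=(s,x_1,\dots,x_n)$ consisting of an initial state $s$ (known before the first request, not counted as a request) and $n$ requests; $n$ is the length. A deterministic online algorithm with advice computes answers $y_1,\dots,y_n$, where $y_i$ is computed from the content $\varphi$ of an infinite advice tape (prepared by an oracle that knows the whole input), $s$ and $x_1,\dots,x_i$; each $y_i$ must lie in a nonempty set of valid answers. Its advice complexity $b(n)$ is the largest number of advice bits read over all inputs of length at most $n$. $\mathrm{ALG}(\sigma)$ denotes the non-negative real cost of the output, $\mathrm{OPT}(\sigma)$ the optimal offline cost. A randomized algorithm with advice complexity $b(n)$ is a probability distribution over deterministic algorithms with advice complexity at most $b(n)$. An algorithm $R$ is $c$-competitive if there is a constant $\alpha$ (not depending on the input, including its initial state) with $\mathbb{E}[R(\sigma)]\leq c\,\mathrm{OPT}(\sigma)+\alpha$ for all inputs $\sigma$; "competitive ratio at least $c$" means it is not $c'$-competitive for any $c'<c$. Repeated problem: for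 $P$-inputs $\sigma_1,\dots,\sigma_r$ with the same initial state $s$, $(\sigma_1;\dots;\sigma_r)$ is the sequence of all their requests concatenated, where the first request of each $\sigma_i$ is marked (it arrives together with $s$) so the algorithm knows when a new round starts. $P^*_\Sigma$ is the online problem whose inputs are all such sequences ($r\geq1$); an algorithm must output, for each round $i$, a valid sequence of $P$-answers $\gamma_i$ for $\sigma_i$ (it remembers all previous rounds), and the cost is $\sum_{i=1}^r \mathrm{cost}_P(\gamma_i,\sigma_i)$; $\mathrm{OPT}^*_\Sigma$ is its optimal offline algorithm. Let $I$, $I^*$ be the sets of inputs of $P$, $P^*_\Sigma$. $P$ is $\Sigma$-repeatable (with parameters $k_1,k_2,k_3\geq 0$) if every fixed $P$-input has only finitely many valid outputs and there is a map $g:I^*\to I$ such that for every $\sigma^*\in I^*$ with $r$ rounds: (1) $|g(\sigma^* )|\leq|\sigma^*|+k_1r$; (2) for every deterministic $P$-algorithm $\mathrm{ALG}$ there is a deterministic $P^*_\Sigma$-algorithm $\mathrm{ALG}^*$ with $\mathrm{ALG}^*(\sigma^* )\leq\mathrm{ALG}(g(\sigma^* ))+k_2r$ for all $\sigma^*$; (3) $\mathrm{OPT}^*_\Sigma(\sigma^* )\geq\mathrm{OPT}(g(\sigma^* ))-k_3r$. *)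

theory Defs
  imports "HOL-Probability.Probability" "HOL-Library.Landau_Symbols"
begin

text \<open>
  An online minimization problem P is given by
   I :: ('s \<times> 'x list) set       -- its inputs (initial state, list of requests),
   V :: input \<Rightarrow> nat \<Rightarrow> 'y set   -- the set of valid answers for the i-th request (0-based),
   C :: input \<Rightarrow> 'y list \<Rightarrow> real  -- the cost of an output on an input.
\<close>

type_synonym ('s, 'x) inp = "'s \<times> 'x list"

definition valid_out :: "(('s,'x) inp \<Rightarrow> nat \<Rightarrow> 'y set) \<Rightarrow> ('s,'x) inp \<Rightarrow> 'y list \<Rightarrow> bool" where
  "valid_out V \<sigma> ys \<longleftrightarrow> length ys = length (snd \<sigma>) \<and> (\<forall>i<length ys. ys ! i \<in> V \<sigma> i)"

definition online_problem ::
  "('s,'x) inp set \<Rightarrow> (('s,'x) inp \<Rightarrow> nat \<Rightarrow> 'y set) \<Rightarrow> (('s,'x) inp \<Rightarrow> 'y list \<Rightarrow> real) \<Rightarrow> bool" where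
  "online_problem I V C \<longleftrightarrow>
     (\<forall>\<sigma>\<in>I. \<forall>i<length (snd \<sigma>). V \<sigma> i \<noteq> {}) \<and>
     (\<forall>\<sigma>\<in>I. \<forall>ys. valid_out V \<sigma> ys \<longrightarrow> 0 \<le> C \<sigma> ys)"

definition OPT :: "(('s,'x) inp \<Rightarrow> nat \<Rightarrow> 'y set) \<Rightarrow> (('s,'x) inp \<Rightarrow> 'y list \<Rightarrow> real) \<Rightarrow> ('s,'x) inp \<Rightarrow> real" where
  "OPT V C \<sigma> = Inf {C \<sigma> ys | ys. valid_out V \<sigma> ys}"

text \<open>A deterministic online algorithm (without advice): the answer to the last request of the
  given prefix, computed from the initial state and the requests seen so far.\<close>
definition run_det :: "('s \<Rightarrow> 'x list \<Rightarrow> 'y) \<Rightarrow> ('s,'x) inp \<Rightarrow> 'y list" where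
  "run_det D \<sigma> = map (\<lambda>i. D (fst \<sigma>) (take (Suc i) (snd \<sigma>))) [0..<length (snd \<sigma>)]"

definition det_alg :: "('s,'x) inp set \<Rightarrow> (('s,'x) inp \<Rightarrow> nat \<Rightarrow> 'y set) \<Rightarrow> ('s \<Rightarrow> 'x list \<Rightarrow> 'y) \<Rightarrow> bool" where
  "det_alg I V D \<longleftrightarrow> (\<forall>\<sigma>\<in>I. valid_out V \<sigma> (run_det D \<sigma>))"

text \<open>A deterministic online algorithm with advice: answer function depending on the advice tape,
  number of advice bits read (sequentially, from the start of the tape) after processing a prefix,
  and the oracle preparing the tape from the whole input.\<close>
record ('s, 'x, 'y) adv_alg =
  ans :: "(nat \<Rightarrow> bool) \<Rightarrow> 's \<Rightarrow> 'x list \<Rightarrow> 'y"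
  rd  :: "(nat \<Rightarrow> bool) \<Rightarrow> 's \<Rightarrow> 'x list \<Rightarrow> nat"
  orc :: "('s,'x) inp \<Rightarrow> nat \<Rightarrow> bool"

definition run_adv :: "('s,'x,'y) adv_alg \<Rightarrow> ('s,'x) inp \<Rightarrow> 'y list" where
  "run_adv A \<sigma> = run_det (ans A (orc A \<sigma>)) \<sigma>"

definition bits_read :: "('s,'x,'y) adv_alg \<Rightarrow> ('s,'x) inp \<Rightarrow> nat" where
  "bits_read A \<sigma> = Max (insert 0
     {rd A (orc A \<sigma>) (fst \<sigma>) (take i (snd \<sigma>)) | i. 1 \<le> i \<and> i \<le> length (snd \<sigma>)})"

definition adv_alg :: "('s,'x) inp set \<Rightarrow> (('s,'x) inp \<Rightarrow> nat \<Rightarrow> 'y set) \<Rightarrow> (nat \<Rightarrow> nat)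
    \<Rightarrow> ('s,'x,'y) adv_alg \<Rightarrow> bool" where
  "adv_alg I V b A \<longleftrightarrow>
     (\<forall>\<phi>. det_alg I V (ans A \<phi>)) \<and>
     (\<forall>\<phi> \<phi>' s xs. (\<forall>k<rd A \<phi> s xs. \<phi> k = \<phi>' k) \<longrightarrow>
         ans A \<phi>' s xs = ans A \<phi> s xs \<and> rd A \<phi>' s xs = rd A \<phi> s xs) \<and>
     (\<forall>n. \<forall>\<sigma>\<in>I. length (snd \<sigma>) \<le> n \<longrightarrow> bits_read A \<sigma> \<le> b n)"

definition rand_alg :: "('s,'x) inp set \<Rightarrow> (('s,'x) inp \<Rightarrow> nat \<Rightarrow> 'y set) \<Rightarrow> (('s,'x) inp \<Rightarrow> 'y list \<Rightarrow> real)
    \<Rightarrow> (nat \<Rightarrow> nat) \<Rightarrow> ('s,'x,'y) adv_alg measure \<Rightarrow> bool" where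
  "rand_alg I V C b M \<longleftrightarrow>
     prob_space M \<and> space M \<subseteq> {A. adv_alg I V b A} \<and>
     (\<forall>\<sigma>\<in>I. (\<lambda>A. C \<sigma> (run_adv A \<sigma>)) \<in> borel_measurable M)"

definition exp_cost :: "(('s,'x) inp \<Rightarrow> 'y list \<Rightarrow> real) \<Rightarrow> ('s,'x,'y) adv_alg measure \<Rightarrow> ('s,'x) inp \<Rightarrow> ennreal" where
  "exp_cost C M \<sigma> = (\<integral>\<^sup>+ A. ennreal (C \<sigma> (run_adv A \<sigma>)) \<partial>M)"

definition competitive :: "('s,'x) inp set \<Rightarrow> (('s,'x) inp \<Rightarrow> nat \<Rightarrow> 'y set) \<Rightarrow> (('s,'x) inp \<Rightarrow> 'y list \<Rightarrow> real)
    \<Rightarrow> ('s,'x,'y) adv_alg measure \<Rightarrow> real \<Rightarrow> bool" where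
  "competitive I V C M c \<longleftrightarrow> (\<exists>\<alpha>::real. \<forall>\<sigma>\<in>I.
      0 \<le> c * OPT V C \<sigma> + \<alpha> \<and> exp_cost C M \<sigma> \<le> ennreal (c * OPT V C \<sigma> + \<alpha>))"

definition ratio_at_least :: "('s,'x) inp set \<Rightarrow> (('s,'x) inp \<Rightarrow> nat \<Rightarrow> 'y set) \<Rightarrow> (('s,'x) inp \<Rightarrow> 'y list \<Rightarrow> real)
    \<Rightarrow> ('s,'x,'y) adv_alg measure \<Rightarrow> real \<Rightarrow> bool" where
  "ratio_at_least I V C M c \<longleftrightarrow> (\<forall>c'<c. \<not> competitive I V C M c')"

text \<open>An input of the repeated problem: common initial state and the list of rounds
  (request lists of the P-inputs sigma_1, ..., sigma_r), r >= 1.\<close>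
definition I_star :: "('s,'x) inp set \<Rightarrow> ('s \<times> 'x list list) set" where
  "I_star I = {(s, xss). xss \<noteq> [] \<and> (\<forall>xs\<in>set xss. xs \<noteq> [] \<and> (s, xs) \<in> I)}"

definition len_star :: "'s \<times> 'x list list \<Rightarrow> nat" where
  "len_star \<sigma>s = sum_list (map length (snd \<sigma>s))"

text \<open>A deterministic algorithm for the repeated problem: answer from the initial state, the
  previous (complete) rounds and the current round's prefix.\<close>
definition run_star :: "('s \<Rightarrow> 'x list list \<Rightarrow> 'x list \<Rightarrow> 'y) \<Rightarrow> 's \<times> 'x list list \<Rightarrow> 'y list list" where
  "run_star D \<sigma>s = map (\<lambda>i. run_det (\<lambda>s xs. D s (take i (snd \<sigma>s)) xs) (fst \<sigma>s, snd \<sigma>s ! i))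
                       [0..<length (snd \<sigma>s)]"

definition valid_star :: "(('s,'x) inp \<Rightarrow> nat \<Rightarrow> 'y set) \<Rightarrow> 's \<times> 'x list list \<Rightarrow> 'y list list \<Rightarrow> bool" where
  "valid_star V \<sigma>s \<gamma>s \<longleftrightarrow> list_all2 (\<lambda>xs \<gamma>. valid_out V (fst \<sigma>s, xs) \<gamma>) (snd \<sigma>s) \<gamma>s"

definition det_alg_star :: "('s,'x) inp set \<Rightarrow> (('s,'x) inp \<Rightarrow> nat \<Rightarrow> 'y set)
    \<Rightarrow> ('s \<Rightarrow> 'x list list \<Rightarrow> 'x list \<Rightarrow> 'y) \<Rightarrow> bool" where
  "det_alg_star I V D \<longleftrightarrow> (\<forall>\<sigma>s\<in>I_star I. valid_star V \<sigma>s (run_star D \<sigma>s))"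

definition cost_star :: "(('s,'x) inp \<Rightarrow> 'y list \<Rightarrow> real) \<Rightarrow> 's \<times> 'x list list \<Rightarrow> 'y list list \<Rightarrow> real" where
  "cost_star C \<sigma>s \<gamma>s = (\<Sum>i<length (snd \<sigma>s). C (fst \<sigma>s, snd \<sigma>s ! i) (\<gamma>s ! i))"

definition OPT_star :: "(('s,'x) inp \<Rightarrow> nat \<Rightarrow> 'y set) \<Rightarrow> (('s,'x) inp \<Rightarrow> 'y list \<Rightarrow> real)
    \<Rightarrow> 's \<times> 'x list list \<Rightarrow> real" where
  "OPT_star V C \<sigma>s = Inf {cost_star C \<sigma>s \<gamma>s | \<gamma>s. valid_star V \<sigma>s \<gamma>s}"

definition repeatable :: "('s,'x) inp set \<Rightarrow> (('s,'x) inp \<Rightarrow> nat \<Rightarrow> 'y set) \<Rightarrow> (('s,'x) inp \<Rightarrow> 'y list \<Rightarrow> real) \<Rightarrow> bool" where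
  "repeatable I V C \<longleftrightarrow>
     (\<forall>\<sigma>\<in>I. finite {ys. valid_out V \<sigma> ys}) \<and>
     (\<exists>(k1::real) (k2::real) (k3::real) (g :: 's \<times> 'x list list \<Rightarrow> ('s,'x) inp).
        0 \<le> k1 \<and> 0 \<le> k2 \<and> 0 \<le> k3 \<and>
        (\<forall>\<sigma>s\<in>I_star I. g \<sigma>s \<in> I) \<and>
        (\<forall>\<sigma>s\<in>I_star I. real (length (snd (g \<sigma>s))) \<le> real (len_star \<sigma>s) + k1 * real (length (snd \<sigma>s))) \<and>
        (\<forall>D. det_alg I V D \<longrightarrow> (\<exists>Ds. det_alg_star I V Ds \<and>
            (\<forall>\<sigma>s\<in>I_star I. cost_star C \<sigma>s (run_star Ds \<sigma>s)
                 \<le> C (g \<sigma>s) (run_det D (g \<sigma>s)) + k2 * real (length (snd \<sigma>s))))) \<and>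
        (\<forall>\<sigma>s\<in>I_star I. OPT_star V C \<sigma>s \<ge> OPT V C (g \<sigma>s) - k3 * real (length (snd \<sigma>s))))"

end

theory Submission
  imports Defs
begin

text \<open>
  Suppose a randomized algorithm with \<open>o(n)\<close> advice were \<open>c1\<close>-competitive for some \<open>c1 < c\<close>.
  Take a hard distribution for \<open>\<epsilon> = c - c1\<close> and a large additive constant. Grouping its support by
  initial state, some state \<open>s\<close> is already hard on its own: on rounds drawn from the distribution
  conditioned on \<open>s\<close>, every deterministic algorithm pays in expectation \<open>c1 * OPT\<close> plus a surplus
  that absorbs the constants of the reduction \<open>g\<close>. Feed \<open>r\<close> independent such rounds to the repeated
  problem and transfer them to \<open>P\<close> through \<open>g\<close>. With \<open>B\<close> advice bits the algorithm is the pointwise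
  best of \<open>2^B\<close> deterministic algorithms for the repeated problem; an exponential-moment bound
  (a Hoeffding-type bound for each round, given the earlier ones) shows that even this minimum keeps a
  surplus of order \<open>r - B\<close> in expectation, whereas competitiveness caps the surplus by a constant.
  Hence \<open>r = O(B)\<close>, although \<open>B = b(O(r)) = o(r)\<close>.
\<close>

subsection \<open>Optimal costs\<close>

lemma valid_out_exists:
  assumes "online_problem I V C" "\<sigma> \<in> I"
  shows "\<exists>ys. valid_out V \<sigma> ys"
proof -
  let ?ys = "map (\<lambda>i. SOME y. y \<in> V \<sigma> i) [0..<length (snd \<sigma>)]"
  have "valid_out V \<sigma> ?ys"
    using assms unfolding valid_out_def online_problem_def
    by (auto intro: someI_ex simp: ex_in_conv[symmetric])
  then show ?thesis by blast
qed

lemma OPT_nonneg: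
  assumes "online_problem I V C" "\<sigma> \<in> I"
  shows "0 \<le> OPT V C \<sigma>"
  unfolding OPT_def using assms valid_out_exists[OF assms]
  by (intro cInf_greatest) (auto simp: online_problem_def)

lemma OPT_attained:
  assumes "online_problem I V C" "\<sigma> \<in> I" "finite {ys. valid_out V \<sigma> ys}"
  obtains ys where "valid_out V \<sigma> ys" "OPT V C \<sigma> = C \<sigma> ys"
proof -
  have costs: "{C \<sigma> ys | ys. valid_out V \<sigma> ys} = C \<sigma> ` {ys. valid_out V \<sigma> ys}" by auto
  have "OPT V C \<sigma> \<in> {C \<sigma> ys | ys. valid_out V \<sigma> ys}"
    unfolding OPT_def costs using assms valid_out_exists[OF assms(1,2)]
    by (intro closed_contains_Inf finite_imp_closed bdd_below_finite) auto
  then show ?thesis using that by blast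
qed

lemma valid_out_Nil: "snd \<sigma> = [] \<Longrightarrow> valid_out V \<sigma> ys \<longleftrightarrow> ys = []"
  unfolding valid_out_def by auto

lemma OPT_Nil: "snd \<sigma> = [] \<Longrightarrow> OPT V C \<sigma> = C \<sigma> []"
  unfolding OPT_def using valid_out_Nil[of \<sigma> V] by simp

lemma run_det_Nil: "snd \<sigma> = [] \<Longrightarrow> run_det D \<sigma> = []"
  unfolding run_det_def by simp

lemma run_det_cong: "D (fst \<sigma>) = D' (fst \<sigma>) \<Longrightarrow> run_det D \<sigma> = run_det D' \<sigma>"
  unfolding run_det_def by simp

subsection \<open>Independent rounds\<close>

definition tuples :: "'a set \<Rightarrow> nat \<Rightarrow> 'a list set" where
  "tuples X r = {xs. set xs \<subseteq> X \<and> length xs = r}"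

definition iid_exp :: "'a set \<Rightarrow> ('a \<Rightarrow> real) \<Rightarrow> nat \<Rightarrow> ('a list \<Rightarrow> real) \<Rightarrow> real" where
  "iid_exp X q r F = (\<Sum>xs\<in>tuples X r. prod_list (map q xs) * F xs)"

lemma finite_tuples: "finite X \<Longrightarrow> finite (tuples X r)"
  unfolding tuples_def by (rule finite_lists_length_eq)

lemma tuples_0: "tuples X 0 = {[]}"
  unfolding tuples_def by auto

lemma tuples_Suc: "tuples X (Suc r) = (\<lambda>(xs, x). xs @ [x]) ` (tuples X r \<times> X)"
proof
  show "(\<lambda>(xs, x). xs @ [x]) ` (tuples X r \<times> X) \<subseteq> tuples X (Suc r)"
    unfolding tuples_def by auto
  show "tuples X (Suc r) \<subseteq> (\<lambda>(xs, x). xs @ [x]) ` (tuples X r \<times> X)"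
  proof
    fix xs assume xs: "xs \<in> tuples X (Suc r)"
    then have "xs \<noteq> []" unfolding tuples_def by auto
    with xs have "xs = butlast xs @ [last xs]" "butlast xs \<in> tuples X r" "last xs \<in> X"
      unfolding tuples_def by (auto dest: in_set_butlastD)
    then show "xs \<in> (\<lambda>(xs, x). xs @ [x]) ` (tuples X r \<times> X)" by force
  qed
qed

lemma prod_list_nonneg_tuples:
  "(\<And>x. x \<in> X \<Longrightarrow> 0 \<le> (q x :: real)) \<Longrightarrow> xs \<in> tuples X r \<Longrightarrow> 0 \<le> prod_list (map q xs)"
  unfolding tuples_def by (induction xs arbitrary: r) auto

lemma iid_exp_0: "iid_exp X q 0 F = F []"
  unfolding iid_exp_def tuples_0 by simp

lemma iid_exp_Suc:
  assumes "finite X"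
  shows "iid_exp X q (Suc r) F = iid_exp X q r (\<lambda>xs. \<Sum>x\<in>X. q x * F (xs @ [x]))"
proof -
  have inj: "inj_on (\<lambda>(xs, x). xs @ [x]) (tuples X r \<times> X)" by (auto simp: inj_on_def)
  have "iid_exp X q (Suc r) F
      = (\<Sum>(xs, x)\<in>tuples X r \<times> X. prod_list (map q (xs @ [x])) * F (xs @ [x]))"
    unfolding iid_exp_def tuples_Suc by (subst sum.reindex[OF inj]) (simp add: case_prod_beta)
  also have "\<dots> = (\<Sum>xs\<in>tuples X r. \<Sum>x\<in>X. prod_list (map q (xs @ [x])) * F (xs @ [x]))"
    by (rule sum.cartesian_product[symmetric])
  also have "\<dots> = iid_exp X q r (\<lambda>xs. \<Sum>x\<in>X. q x * F (xs @ [x]))"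
    unfolding iid_exp_def by (simp add: sum_distrib_left algebra_simps)
  finally show ?thesis .
qed

lemma iid_exp_mono:
  assumes "\<And>x. x \<in> X \<Longrightarrow> 0 \<le> q x" "\<And>xs. xs \<in> tuples X r \<Longrightarrow> F xs \<le> G xs"
  shows "iid_exp X q r F \<le> iid_exp X q r G"
  unfolding iid_exp_def using assms prod_list_nonneg_tuples[of X q]
  by (intro sum_mono mult_left_mono) auto

lemma iid_exp_add: "iid_exp X q r (\<lambda>xs. F xs + G xs) = iid_exp X q r F + iid_exp X q r G"
  unfolding iid_exp_def by (simp add: algebra_simps sum.distrib)

lemma iid_exp_cmult: "iid_exp X q r (\<lambda>xs. a * F xs) = a * iid_exp X q r F"
  unfolding iid_exp_def by (simp add: algebra_simps sum_distrib_left)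

lemma iid_exp_sum: "iid_exp X q r (\<lambda>xs. \<Sum>i\<in>J. F i xs) = (\<Sum>i\<in>J. iid_exp X q r (F i))"
  unfolding iid_exp_def by (simp add: sum_distrib_left sum.swap[of _ J])

lemma iid_exp_const:
  assumes "finite X" "sum q X = 1"
  shows "iid_exp X q r (\<lambda>_. a) = a"
proof (induction r)
  case 0
  then show ?case by (simp add: iid_exp_0)
next
  case (Suc r)
  then show ?case using assms by (simp add: iid_exp_Suc sum_distrib_right[symmetric])
qed

lemma iid_exp_sum_rounds:
  assumes "finite X" "sum q X = 1"
  shows "iid_exp X q r (\<lambda>xs. \<Sum>i<length xs. f (xs ! i)) = real r * (\<Sum>x\<in>X. q x * f x)"
proof (induction r)
  case 0
  then show ?case by (simp add: iid_exp_0)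
next
  case (Suc r)
  have "iid_exp X q (Suc r) (\<lambda>xs. \<Sum>i<length xs. f (xs ! i))
      = iid_exp X q r (\<lambda>xs. (\<Sum>x\<in>X. q x) * (\<Sum>i<length xs. f (xs ! i)) + (\<Sum>x\<in>X. q x * f x))"
    by (simp add: iid_exp_Suc[OF assms(1)] nth_append sum_distrib_right sum_distrib_left
        sum.distrib algebra_simps sum.swap[of _ X])
  also have "\<dots> = real r * (\<Sum>x\<in>X. q x * f x) + (\<Sum>x\<in>X. q x * f x)"
    using Suc assms by (simp add: iid_exp_add iid_exp_const)
  finally show ?case by (simp add: algebra_simps)
qed

lemma exp_iid_exp_le:
  assumes "finite X" "X \<noteq> {}" "\<And>x. x \<in> X \<Longrightarrow> 0 \<le> q x" "sum q X = 1"
  shows "exp (iid_exp X q r F) \<le> iid_exp X q r (\<lambda>xs. exp (F xs))"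
proof -
  obtain x where "x \<in> X" using assms(2) by auto
  then have "replicate r x \<in> tuples X r" unfolding tuples_def by auto
  then have nonempty: "tuples X r \<noteq> {}" by blast
  have "(\<Sum>xs\<in>tuples X r. prod_list (map q xs)) = 1"
    using iid_exp_const[OF assms(1,4), of r 1] unfolding iid_exp_def by simp
  then show ?thesis unfolding iid_exp_def
    using convex_on_sum[OF finite_tuples[OF assms(1)] nonempty exp_convex, of _ F]
      prod_list_nonneg_tuples[of X q] assms(3)
    by auto
qed

lemma le_weighted_sum_if_nn_integral_le:
  fixes F :: "'a \<Rightarrow> 'b \<Rightarrow> real"
  assumes M: "prob_space M" and T: "finite T" and w: "\<And>t. t \<in> T \<Longrightarrow> 0 \<le> w t"
    and low: "\<And>A. A \<in> space M \<Longrightarrow> lower \<le> (\<Sum>t\<in>T. w t * F A t)"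
    and F: "\<And>A t. A \<in> space M \<Longrightarrow> t \<in> T \<Longrightarrow> 0 \<le> F A t"
    and meas: "\<And>t. t \<in> T \<Longrightarrow> (\<lambda>A. F A t) \<in> borel_measurable M"
    and up: "\<And>t. t \<in> T \<Longrightarrow> (\<integral>\<^sup>+A. ennreal (F A t) \<partial>M) \<le> ennreal (U t)"
    and U: "\<And>t. t \<in> T \<Longrightarrow> 0 \<le> U t"
  shows "lower \<le> (\<Sum>t\<in>T. w t * U t)"
proof -
  have ennreal_sum: "ennreal (\<Sum>t\<in>T. w t * G t) = (\<Sum>t\<in>T. ennreal (w t) * ennreal (G t))"
    if "\<And>t. t \<in> T \<Longrightarrow> 0 \<le> G t" for G
    using w that by (subst sum_ennreal[symmetric]) (auto intro!: sum.cong simp: ennreal_mult)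
  have "ennreal lower = (\<integral>\<^sup>+A. ennreal lower \<partial>M)"
    using prob_space.emeasure_space_1[OF M] by simp
  also have "\<dots> \<le> (\<integral>\<^sup>+A. (\<Sum>t\<in>T. ennreal (w t) * ennreal (F A t)) \<partial>M)"
    using low F by (intro nn_integral_mono) (simp add: ennreal_leI flip: ennreal_sum)
  also have "\<dots> = (\<Sum>t\<in>T. ennreal (w t) * (\<integral>\<^sup>+A. ennreal (F A t) \<partial>M))"
    using meas by (subst nn_integral_sum) (auto simp: nn_integral_cmult)
  also have "\<dots> \<le> (\<Sum>t\<in>T. ennreal (w t) * ennreal (U t))"
    using up by (intro sum_mono mult_left_mono) auto
  also have "\<dots> = ennreal (\<Sum>t\<in>T. w t * U t)"
    using U by (simp flip: ennreal_sum)
  finally show ?thesis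
    using w U by (simp add: ennreal_le_iff sum_nonneg)
qed

lemma smallo_exists_exceeding:
  assumes "(\<lambda>n. real (f n)) \<in> o(\<lambda>n. real n)" "0 < m"
  shows "\<exists>r\<ge>1. c * real (f (r * m)) + d < real r"
proof -
  define \<delta> where "\<delta> = 1 / (2 * (\<bar>c\<bar> + 1) * real m)"
  have "0 < \<delta>" unfolding \<delta>_def using assms(2) by (simp add: add_pos_nonneg)
  from landau_o.smallD[OF assms(1) this] obtain n0 where n0: "\<And>n. n0 \<le> n \<Longrightarrow> real (f n) \<le> \<delta> * real n"
    unfolding eventually_at_top_linorder by auto
  define r where "r = n0 + nat \<lceil>2 * \<bar>d\<bar>\<rceil> + 1"
  have "r \<le> r * m" using assms(2) by simp
  then have f_le: "real (f (r * m)) \<le> \<delta> * real (r * m)" by (intro n0) (simp add: r_def)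
  have "c * real (f (r * m)) \<le> \<bar>c\<bar> * (\<delta> * real (r * m))"
    using f_le by (intro order_trans[OF mult_right_mono mult_left_mono]) auto
  also have "\<dots> = real r * (\<bar>c\<bar> / (2 * (\<bar>c\<bar> + 1)))"
  proof -
    have "0 < \<bar>c\<bar> + 1" by simp
    then show ?thesis unfolding \<delta>_def using assms(2) by (simp add: divide_simps)
  qed
  also have "\<dots> < real r * (1 / 2)"
  proof (rule mult_strict_left_mono)
    show "0 < real r" unfolding r_def of_nat_0_less_iff by simp
  qed (simp add: field_simps)
  finally have "c * real (f (r * m)) < real r / 2" by simp
  moreover have "d < real r / 2"
  proof -
    have "d < (real n0 + e + 1) / 2" if "2 * \<bar>d\<bar> \<le> e" for e
      using that by (simp add: field_simps)
    from this[OF real_nat_ceiling_ge] show ?thesis by (simp only: r_def of_nat_add of_nat_1)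
  qed
  ultimately show ?thesis by (intro exI[of _ r]) (auto simp: r_def)
qed

subsection \<open>Advice and randomization\<close>

lemma rd_le_bits_read:
  assumes "i < length (snd \<sigma>)"
  shows "rd A (orc A \<sigma>) (fst \<sigma>) (take (Suc i) (snd \<sigma>)) \<le> bits_read A \<sigma>"
proof -
  have "{rd A (orc A \<sigma>) (fst \<sigma>) (take i (snd \<sigma>)) | i. 1 \<le> i \<and> i \<le> length (snd \<sigma>)}
      = (\<lambda>i. rd A (orc A \<sigma>) (fst \<sigma>) (take i (snd \<sigma>))) ` {1..length (snd \<sigma>)}"
    by auto
  then show ?thesis unfolding bits_read_def using assms by (auto intro!: Max_ge)
qed

lemma run_adv_truncated_tape:
  assumes "adv_alg I V b A" "bits_read A \<sigma> \<le> B"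
  shows "run_det (ans A (\<lambda>k. k < B \<and> orc A \<sigma> k)) \<sigma> = run_adv A \<sigma>"
proof -
  have "ans A (\<lambda>k. k < B \<and> orc A \<sigma> k) (fst \<sigma>) (take (Suc i) (snd \<sigma>))
      = ans A (orc A \<sigma>) (fst \<sigma>) (take (Suc i) (snd \<sigma>))" if "i < length (snd \<sigma>)" for i
    using rd_le_bits_read[OF that, of A] assms unfolding adv_alg_def by auto
  then show ?thesis unfolding run_adv_def run_det_def by simp
qed

definition tapes :: "nat \<Rightarrow> (nat \<Rightarrow> bool) set" where
  "tapes B = (\<lambda>w k. k < B \<and> w ! k) ` {w. length w = B}"

lemma finite_tapes: "finite (tapes B)"
  unfolding tapes_def using finite_lists_length_eq[of "UNIV :: bool set" B] by simp

lemma card_tapes_le: "card (tapes B) \<le> 2 ^ B"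
proof -
  have "card (tapes B) \<le> card {w :: bool list. length w = B}"
    unfolding tapes_def using finite_lists_length_eq[of "UNIV :: bool set" B]
    by (intro card_image_le) simp
  also have "\<dots> = 2 ^ B" using card_lists_length_eq[of "UNIV :: bool set" B] by simp
  finally show ?thesis .
qed

lemma truncated_tape_in_tapes: "(\<lambda>k. k < B \<and> \<phi> k) \<in> tapes B"
  unfolding tapes_def by (rule image_eqI[of _ _ "map \<phi> [0..<B]"]) (auto simp: fun_eq_iff)

lemma rand_alg_imp_det_alg_exists:
  assumes "rand_alg I V C b M"
  shows "\<exists>D. det_alg I V D"
proof -
  obtain A where "A \<in> space M"
    using assms prob_space.not_empty unfolding rand_alg_def by blast
  then show ?thesis using assms unfolding rand_alg_def adv_alg_def by blast
qed

lemma competitive_OPT_bounds: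
  assumes "prob_space M"
    and comp: "\<forall>\<sigma>\<in>I. 0 \<le> c1 * OPT V C \<sigma> + \<alpha> \<and> exp_cost C M \<sigma> \<le> ennreal (c1 * OPT V C \<sigma> + \<alpha>)"
    and \<sigma>: "\<sigma> \<in> I"
  shows "snd \<sigma> = [] \<Longrightarrow> (1 - c1) * OPT V C \<sigma> \<le> \<bar>\<alpha>\<bar>"
    and "(max c1 0 - c1) * OPT V C \<sigma> \<le> \<bar>\<alpha>\<bar>"
proof -
  assume "snd \<sigma> = []"
  then have "exp_cost C M \<sigma> = ennreal (OPT V C \<sigma>)"
    using prob_space.emeasure_space_1[OF assms(1)]
    by (simp add: exp_cost_def run_adv_def run_det_Nil OPT_Nil)
  then have "OPT V C \<sigma> \<le> c1 * OPT V C \<sigma> + \<alpha>" using comp \<sigma> by auto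
  then show "(1 - c1) * OPT V C \<sigma> \<le> \<bar>\<alpha>\<bar>" by (simp add: algebra_simps)
next
  show "(max c1 0 - c1) * OPT V C \<sigma> \<le> \<bar>\<alpha>\<bar>" using comp \<sigma> by (cases "0 \<le> c1") auto
qed

subsection \<open>The repeated problem\<close>

definition rounds_cost ::
    "(('s,'x) inp \<Rightarrow> 'y list \<Rightarrow> real) \<Rightarrow> ('s \<Rightarrow> 'x list list \<Rightarrow> 'x list \<Rightarrow> 'y) \<Rightarrow>
      's \<Rightarrow> 'x list list \<Rightarrow> real" where
  "rounds_cost C Ds s xss =
     (\<Sum>i<length xss. C (s, xss ! i) (run_det (\<lambda>s' xs. Ds s' (take i xss) xs) (s, xss ! i)))"

lemma cost_star_run_star: "cost_star C (s, xss) (run_star Ds (s, xss)) = rounds_cost C Ds s xss"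
  unfolding cost_star_def run_star_def rounds_cost_def by (intro sum.cong) auto

lemma rounds_cost_snoc:
  "rounds_cost C Ds s (xss @ [xs]) = rounds_cost C Ds s xss + C (s, xs) (run_det (\<lambda>s' ys. Ds s' xss ys) (s, xs))"
  unfolding rounds_cost_def by (simp add: nth_append)

lemma det_alg_next_round:
  assumes "det_alg_star I V Ds" "det_alg I V D0"
    and "\<forall>xs\<in>set prev. xs \<noteq> [] \<and> (s, xs) \<in> I"
  shows "det_alg I V (\<lambda>s' xs. if s' = s then Ds s' prev xs else D0 s' xs)"
  unfolding det_alg_def
proof
  fix \<sigma> assume \<sigma>: "\<sigma> \<in> I"
  let ?D = "\<lambda>s' xs. if s' = s then Ds s' prev xs else D0 s' xs"
  show "valid_out V \<sigma> (run_det ?D \<sigma>)"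
  proof (cases "fst \<sigma> = s \<and> snd \<sigma> \<noteq> []")
    case False
    then consider "snd \<sigma> = []" | "fst \<sigma> \<noteq> s" by blast
    then show ?thesis
    proof cases
      case 2
      then have "run_det ?D \<sigma> = run_det D0 \<sigma>" by (intro run_det_cong) auto
      then show ?thesis using assms(2) \<sigma> unfolding det_alg_def by simp
    qed (simp add: valid_out_Nil run_det_Nil)
  next
    case True
    then obtain xs where \<sigma>_eq: "\<sigma> = (s, xs)" by (cases \<sigma>) auto
    then have "(s, prev @ [xs]) \<in> I_star I"
      using assms(3) True \<sigma> unfolding I_star_def by auto
    then have "valid_star V (s, prev @ [xs]) (run_star Ds (s, prev @ [xs]))"
      using assms(1) unfolding det_alg_star_def by auto
    then have "valid_out V (s, xs) (run_star Ds (s, prev @ [xs]) ! length prev)"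
      unfolding valid_star_def by (auto dest: list_all2_nthD)
    moreover have "run_star Ds (s, prev @ [xs]) ! length prev = run_det ?D \<sigma>"
      unfolding run_star_def \<sigma>_eq by (simp add: nth_append run_det_def)
    ultimately show ?thesis using \<sigma>_eq by simp
  qed
qed

lemma OPT_star_le_sum_OPT:
  assumes "online_problem I V C" "\<forall>\<sigma>\<in>I. finite {ys. valid_out V \<sigma> ys}"
    and "\<forall>xs\<in>set xss. (s, xs) \<in> I"
  shows "OPT_star V C (s, xss) \<le> (\<Sum>i<length xss. OPT V C (s, xss ! i))"
proof -
  have "\<exists>ys. valid_out V (s, xs) ys \<and> OPT V C (s, xs) = C (s, xs) ys" if "xs \<in> set xss" for xs
    using assms that by (metis OPT_attained)
  then obtain opt where opt: "\<And>xs. xs \<in> set xss \<Longrightarrow>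
      valid_out V (s, xs) (opt xs) \<and> OPT V C (s, xs) = C (s, xs) (opt xs)"
    by metis
  have valid: "valid_star V (s, xss) (map opt xss)"
    unfolding valid_star_def list_all2_conv_all_nth using opt by simp
  have bdd: "bdd_below {cost_star C (s, xss) \<gamma>s | \<gamma>s. valid_star V (s, xss) \<gamma>s}"
  proof (rule bdd_belowI)
    fix y assume "y \<in> {cost_star C (s, xss) \<gamma>s | \<gamma>s. valid_star V (s, xss) \<gamma>s}"
    then obtain \<gamma>s where "y = cost_star C (s, xss) \<gamma>s" "valid_star V (s, xss) \<gamma>s" by blast
    then show "0 \<le> y"
      using assms(1,3) unfolding cost_star_def valid_star_def list_all2_conv_all_nth online_problem_def
      by (auto intro!: sum_nonneg)
  qed
  have "OPT_star V C (s, xss) \<le> cost_star C (s, xss) (map opt xss)"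
    unfolding OPT_star_def using valid bdd by (intro cInf_lower) auto
  also have "\<dots> = (\<Sum>i<length xss. OPT V C (s, xss ! i))"
    unfolding cost_star_def using opt by (intro sum.cong) auto
  finally show ?thesis .
qed

locale repetition_reduction =
  fixes I :: "('s,'x) inp set" and V :: "('s,'x) inp \<Rightarrow> nat \<Rightarrow> 'y set"
    and C :: "('s,'x) inp \<Rightarrow> 'y list \<Rightarrow> real"
    and g :: "'s \<times> 'x list list \<Rightarrow> ('s,'x) inp" and k1 k2 k3 :: real
  assumes finite_outputs: "\<sigma> \<in> I \<Longrightarrow> finite {ys. valid_out V \<sigma> ys}"
    and k2_nonneg: "0 \<le> k2" and k3_nonneg: "0 \<le> k3"
    and g_in_I: "\<sigma>s \<in> I_star I \<Longrightarrow> g \<sigma>s \<in> I"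
    and length_g: "\<sigma>s \<in> I_star I \<Longrightarrow>
      real (length (snd (g \<sigma>s))) \<le> real (len_star \<sigma>s) + k1 * real (length (snd \<sigma>s))"
    and simulation: "det_alg I V D \<Longrightarrow> \<exists>Ds. det_alg_star I V Ds \<and>
      (\<forall>\<sigma>s\<in>I_star I. cost_star C \<sigma>s (run_star Ds \<sigma>s)
         \<le> C (g \<sigma>s) (run_det D (g \<sigma>s)) + k2 * real (length (snd \<sigma>s)))"
    and OPT_g_le: "\<sigma>s \<in> I_star I \<Longrightarrow> OPT V C (g \<sigma>s) - k3 * real (length (snd \<sigma>s)) \<le> OPT_star V C \<sigma>s"
begin

definition sim :: "('s \<Rightarrow> 'x list \<Rightarrow> 'y) \<Rightarrow> 's \<Rightarrow> 'x list list \<Rightarrow> 'x list \<Rightarrow> 'y" where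
  "sim D = (SOME Ds. det_alg_star I V Ds \<and>
      (\<forall>\<sigma>s\<in>I_star I. cost_star C \<sigma>s (run_star Ds \<sigma>s)
         \<le> C (g \<sigma>s) (run_det D (g \<sigma>s)) + k2 * real (length (snd \<sigma>s))))"

lemma
  assumes "det_alg I V D"
  shows det_alg_star_sim: "det_alg_star I V (sim D)"
    and cost_star_sim_le: "\<sigma>s \<in> I_star I \<Longrightarrow>
      cost_star C \<sigma>s (run_star (sim D) \<sigma>s) \<le> C (g \<sigma>s) (run_det D (g \<sigma>s)) + k2 * real (length (snd \<sigma>s))"
  using someI_ex[OF simulation[OF assms]] unfolding sim_def by blast+

lemma length_g_le:
  assumes "(s, xss) \<in> I_star I" "\<forall>xs\<in>set xss. length xs \<le> m"
  shows "length (snd (g (s, xss))) \<le> length xss * (m + nat \<lceil>k1\<rceil>)"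
proof -
  have "len_star (s, xss) \<le> length xss * m"
    using assms(2) unfolding len_star_def by (induction xss) auto
  then have "real (len_star (s, xss)) \<le> real (length xss) * real m"
    by (metis of_nat_mono of_nat_mult)
  moreover have "k1 * real (length xss) \<le> real (nat \<lceil>k1\<rceil>) * real (length xss)"
    by (intro mult_right_mono) linarith+
  ultimately have "real (length (snd (g (s, xss)))) \<le> real (length xss * (m + nat \<lceil>k1\<rceil>))"
    using length_g[OF assms(1)] by (simp add: algebra_simps)
  then show ?thesis by linarith
qed

end

lemma repeatable_imp_repetition_reduction:
  assumes "repeatable I V C"
  obtains g k1 k2 k3 where "repetition_reduction I V C g k1 k2 k3"
proof -
  obtain g k1 k2 k3 where "\<forall>\<sigma>\<in>I. finite {ys. valid_out V \<sigma> ys}" "0 \<le> k2" "0 \<le> k3"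
    "\<forall>\<sigma>s\<in>I_star I. g \<sigma>s \<in> I"
    "\<forall>\<sigma>s\<in>I_star I. real (length (snd (g \<sigma>s))) \<le> real (len_star \<sigma>s) + k1 * real (length (snd \<sigma>s))"
    "\<forall>D. det_alg I V D \<longrightarrow> (\<exists>Ds. det_alg_star I V Ds \<and>
      (\<forall>\<sigma>s\<in>I_star I. cost_star C \<sigma>s (run_star Ds \<sigma>s)
         \<le> C (g \<sigma>s) (run_det D (g \<sigma>s)) + k2 * real (length (snd \<sigma>s))))"
    "\<forall>\<sigma>s\<in>I_star I. OPT V C (g \<sigma>s) - k3 * real (length (snd \<sigma>s)) \<le> OPT_star V C \<sigma>s"
    using assms unfolding repeatable_def by auto
  then show ?thesis by (intro that[of g k1 k2 k3]) (unfold_locales, auto)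
qed

subsection \<open>Hard rounds\<close>

lemma exp_minus_le_quadratic:
  assumes "0 \<le> (t::real)"
  shows "exp (- t) \<le> 1 - t + t\<^sup>2 / 2"
proof -
  have pos: "0 < 1 + t + t\<^sup>2 / 2" using assms by (simp add: add_pos_nonneg)
  have "(1 - t + t\<^sup>2 / 2) * (1 + t + t\<^sup>2 / 2) = 1 + t ^ 4 / 4"
    by (simp add: algebra_simps power2_eq_square power4_eq_xxxx)
  then have prod_ge_1: "1 \<le> (1 - t + t\<^sup>2 / 2) * (1 + t + t\<^sup>2 / 2)" by simp
  have "exp (- t) = 1 / exp t" by (simp add: exp_minus field_simps)
  also have "\<dots> \<le> 1 / (1 + t + t\<^sup>2 / 2)"
    using exp_lower_Taylor_quadratic[OF assms] pos by (intro divide_left_mono) auto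
  also have "\<dots> \<le> 1 - t + t\<^sup>2 / 2" using prod_ge_1 pos by (simp add: divide_le_eq)
  finally show ?thesis .
qed

locale hard_rounds =
  fixes I :: "('s,'x) inp set" and V :: "('s,'x) inp \<Rightarrow> nat \<Rightarrow> 'y set"
    and C :: "('s,'x) inp \<Rightarrow> 'y list \<Rightarrow> real"
    and s :: 's and X :: "'x list set" and q :: "'x list \<Rightarrow> real" and L Mx :: real
  assumes online: "online_problem I V C"
    and finite_X: "finite X" and X_nonempty: "X \<noteq> {}"
    and rounds_nonempty: "xs \<in> X \<Longrightarrow> xs \<noteq> []"
    and rounds_in_I: "xs \<in> X \<Longrightarrow> (s, xs) \<in> I"
    and q_nonneg: "xs \<in> X \<Longrightarrow> 0 \<le> q xs" and q_sum: "sum q X = 1"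
    and det_alg_exists: "\<exists>D. det_alg I V D"
    and hard: "det_alg I V D \<Longrightarrow> L \<le> (\<Sum>xs\<in>X. q xs * C (s, xs) (run_det D (s, xs)))"
    and cost_le: "det_alg I V D \<Longrightarrow> xs \<in> X \<Longrightarrow> C (s, xs) (run_det D (s, xs)) \<le> Mx"
begin

lemma cost_nonneg: "det_alg I V D \<Longrightarrow> xs \<in> X \<Longrightarrow> 0 \<le> C (s, xs) (run_det D (s, xs))"
  using online rounds_in_I unfolding online_problem_def det_alg_def by blast

lemma Max_length_pos: "0 < Max (length ` X)"
proof -
  obtain xs where "xs \<in> X" using X_nonempty by blast
  then have "0 < length xs" "length xs \<le> Max (length ` X)" using rounds_nonempty finite_X by auto
  then show ?thesis by linarith
qed

lemma tuples_in_I_star: "1 \<le> r \<Longrightarrow> xss \<in> tuples X r \<Longrightarrow> (s, xss) \<in> I_star I"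
  unfolding I_star_def tuples_def using rounds_nonempty rounds_in_I by (cases xss) auto

text \<open>A Hoeffding-type bound for a single round, whatever the earlier rounds were.\<close>
lemma next_round_exp_moment_le:
  assumes "det_alg_star I V Ds" "set prev \<subseteq> X" "0 < t"
  shows "(\<Sum>xs\<in>X. q xs * exp (- t * C (s, xs) (run_det (\<lambda>s' ys. Ds s' prev ys) (s, xs))))
           \<le> exp (- t * L + t\<^sup>2 * Mx\<^sup>2 / 2)"
proof -
  obtain D0 where D0: "det_alg I V D0" using det_alg_exists by blast
  let ?D = "\<lambda>s' xs. if s' = s then Ds s' prev xs else D0 s' xs"
  have D: "det_alg I V ?D"
    using assms(2) rounds_nonempty rounds_in_I by (intro det_alg_next_round[OF assms(1) D0]) auto
  define Y where "Y xs = C (s, xs) (run_det ?D (s, xs))" for xs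
  have Y_eq: "Y xs = C (s, xs) (run_det (\<lambda>s' ys. Ds s' prev ys) (s, xs))" for xs
    unfolding Y_def by (subst run_det_cong) auto
  have "exp (- t * Y xs) \<le> 1 - t * Y xs + t\<^sup>2 * Mx\<^sup>2 / 2" if "xs \<in> X" for xs
  proof -
    have Y: "0 \<le> Y xs" "Y xs \<le> Mx" unfolding Y_def using cost_nonneg cost_le D that by auto
    then have "(t * Y xs)\<^sup>2 \<le> t\<^sup>2 * Mx\<^sup>2"
      using assms(3) by (simp add: power_mult_distrib power_mono)
    then show ?thesis
      using exp_minus_le_quadratic[of "t * Y xs"] Y assms(3) by simp
  qed
  then have "(\<Sum>xs\<in>X. q xs * exp (- t * Y xs)) \<le> (\<Sum>xs\<in>X. q xs * (1 - t * Y xs + t\<^sup>2 * Mx\<^sup>2 / 2))"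
    using q_nonneg by (intro sum_mono mult_left_mono) auto
  also have "\<dots> = sum q X * (1 + t\<^sup>2 * Mx\<^sup>2 / 2) - t * (\<Sum>xs\<in>X. q xs * Y xs)"
    by (simp add: algebra_simps sum.distrib sum_distrib_left sum_distrib_right sum_subtractf)
  also have "\<dots> \<le> 1 + (- t * L + t\<^sup>2 * Mx\<^sup>2 / 2)"
    using q_sum hard[OF D] assms(3) unfolding Y_def by (simp add: mult_left_mono)
  also have "\<dots> \<le> exp (- t * L + t\<^sup>2 * Mx\<^sup>2 / 2)"
    by (rule exp_ge_add_one_self)
  finally show ?thesis unfolding Y_eq .
qed

lemma iid_exp_exp_rounds_cost_le:
  assumes "det_alg_star I V Ds" "0 < t"
  shows "iid_exp X q r (\<lambda>xss. exp (- t * rounds_cost C Ds s xss)) \<le> exp (- t * L + t\<^sup>2 * Mx\<^sup>2 / 2) ^ r"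
proof (induction r)
  case 0
  then show ?case by (simp add: iid_exp_0 rounds_cost_def)
next
  case (Suc r)
  let ?\<theta> = "exp (- t * L + t\<^sup>2 * Mx\<^sup>2 / 2)"
  have "iid_exp X q (Suc r) (\<lambda>xss. exp (- t * rounds_cost C Ds s xss))
      = iid_exp X q r (\<lambda>prev. exp (- t * rounds_cost C Ds s prev) *
          (\<Sum>xs\<in>X. q xs * exp (- t * C (s, xs) (run_det (\<lambda>s' ys. Ds s' prev ys) (s, xs)))))"
    unfolding iid_exp_Suc[OF finite_X] rounds_cost_snoc
    by (simp add: distrib_left sum_distrib_left algebra_simps flip: exp_add)
  also have "\<dots> \<le> iid_exp X q r (\<lambda>prev. exp (- t * rounds_cost C Ds s prev) * ?\<theta>)"
    using next_round_exp_moment_le[OF assms(1) _ assms(2)]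
    by (intro iid_exp_mono q_nonneg mult_left_mono) (auto simp: tuples_def)
  also have "\<dots> \<le> ?\<theta> ^ Suc r"
    using Suc iid_exp_cmult[of X q r ?\<theta>] by (simp add: mult.commute)
  finally show ?case .
qed

end

subsection \<open>A hard initial state\<close>

text \<open>Otherwise the algorithms that do badly on the single initial states glue to one algorithm.\<close>
lemma exists_initial_state_sum_nonneg:
  fixes w :: "('s,'x) inp \<Rightarrow> 'y list \<Rightarrow> real"
  assumes "finite S" "\<exists>D. det_alg I V D"
    and pos: "\<And>D. det_alg I V D \<Longrightarrow> 0 < (\<Sum>\<sigma>\<in>S. w \<sigma> (run_det D \<sigma>))"
  shows "\<exists>s. {\<sigma>\<in>S. fst \<sigma> = s} \<noteq> {} \<and>
    (\<forall>D. det_alg I V D \<longrightarrow> 0 \<le> (\<Sum>\<sigma>\<in>{\<sigma>\<in>S. fst \<sigma> = s}. w \<sigma> (run_det D \<sigma>)))"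
proof (rule ccontr)
  assume neg: "\<not> ?thesis"
  have bad: "\<forall>s. \<exists>D. det_alg I V D \<and> (\<Sum>\<sigma>\<in>{\<sigma>\<in>S. fst \<sigma> = s}. w \<sigma> (run_det D \<sigma>)) \<le> 0"
  proof
    fix s
    show "\<exists>D. det_alg I V D \<and> (\<Sum>\<sigma>\<in>{\<sigma>\<in>S. fst \<sigma> = s}. w \<sigma> (run_det D \<sigma>)) \<le> 0"
    proof (cases "{\<sigma>\<in>S. fst \<sigma> = s} = {}")
      case True
      obtain D0 where "det_alg I V D0" using assms(2) ..
      then show ?thesis unfolding True by auto
    next
      case False
      then show ?thesis using neg by (meson not_le less_imp_le)
    qed
  qed
  obtain Ds where Ds: "\<And>s. det_alg I V (Ds s)"
    "\<And>s. (\<Sum>\<sigma>\<in>{\<sigma>\<in>S. fst \<sigma> = s}. w \<sigma> (run_det (Ds s) \<sigma>)) \<le> 0"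
    using choice[OF bad] by blast
  define D where "D s = Ds s s" for s
  have run: "run_det D \<sigma> = run_det (Ds (fst \<sigma>)) \<sigma>" for \<sigma>
    unfolding D_def by (rule run_det_cong) simp
  have det: "det_alg I V D"
    using Ds(1) unfolding det_alg_def run by blast
  have "(\<Sum>\<sigma>\<in>S. w \<sigma> (run_det D \<sigma>))
      = (\<Sum>s\<in>fst ` S. \<Sum>\<sigma>\<in>{\<sigma>\<in>S. fst \<sigma> = s}. w \<sigma> (run_det (Ds (fst \<sigma>)) \<sigma>))"
    unfolding run by (rule sum.group[symmetric]) (use assms(1) in auto)
  also have "\<dots> = (\<Sum>s\<in>fst ` S. \<Sum>\<sigma>\<in>{\<sigma>\<in>S. fst \<sigma> = s}. w \<sigma> (run_det (Ds s) \<sigma>))"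
    by (intro sum.cong) auto
  also have "\<dots> \<le> 0" by (intro sum_nonpos Ds(2))
  finally show False using pos[OF det] by linarith
qed

lemma excess_on_nonempty_inputs_ge:
  fixes p :: "('s,'x) inp pmf"
  assumes fin: "finite (set_pmf p)"
    and hard: "c1 * measure_pmf.expectation p (OPT V C) + alpha
      \<le> measure_pmf.expectation p (\<lambda>\<sigma>. C \<sigma> (run_det D \<sigma>))"
    and empty_bound: "\<And>\<sigma>. \<sigma> \<in> set_pmf p \<Longrightarrow> snd \<sigma> = [] \<Longrightarrow> (1 - c1) * OPT V C \<sigma> \<le> K"
    and bound: "\<And>\<sigma>. \<sigma> \<in> set_pmf p \<Longrightarrow> (a - c1) * OPT V C \<sigma> \<le> K"
    and beta: "0 \<le> beta"
  shows "alpha - (K + beta)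
    \<le> (\<Sum>\<sigma>\<in>{\<sigma>\<in>set_pmf p. snd \<sigma> \<noteq> []}. pmf p \<sigma> * (C \<sigma> (run_det D \<sigma>) - (a * OPT V C \<sigma> + beta)))"
proof -
  let ?S = "set_pmf p"
  let ?excess = "\<lambda>\<sigma>. C \<sigma> (run_det D \<sigma>) - (a * OPT V C \<sigma> + beta)"
  have expectation: "measure_pmf.expectation p f = (\<Sum>\<sigma>\<in>?S. pmf p \<sigma> * f \<sigma>)" for f :: "_ \<Rightarrow> real"
    by (subst integral_measure_pmf[OF fin]) auto
  have pointwise: "C \<sigma> (run_det D \<sigma>) - c1 * OPT V C \<sigma> \<le> K + beta + (if snd \<sigma> \<noteq> [] then ?excess \<sigma> else 0)"
    if "\<sigma> \<in> ?S" for \<sigma>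
  proof (cases "snd \<sigma> = []")
    case True
    then show ?thesis
      using empty_bound[OF that] beta by (simp add: run_det_Nil OPT_Nil algebra_simps)
  next
    case False
    then show ?thesis using bound[OF that] by (simp add: algebra_simps)
  qed
  have "alpha \<le> (\<Sum>\<sigma>\<in>?S. pmf p \<sigma> * (C \<sigma> (run_det D \<sigma>) - c1 * OPT V C \<sigma>))"
    using hard unfolding expectation
    by (simp add: algebra_simps sum_subtractf sum_distrib_left)
  also have "\<dots> \<le> (\<Sum>\<sigma>\<in>?S. pmf p \<sigma> * (K + beta + (if snd \<sigma> \<noteq> [] then ?excess \<sigma> else 0)))"
    using pointwise by (intro sum_mono mult_left_mono) auto
  also have "\<dots> = K + beta + (\<Sum>\<sigma>\<in>{\<sigma>\<in>?S. snd \<sigma> \<noteq> []}. pmf p \<sigma> * ?excess \<sigma>)"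
  proof -
    have "pmf p \<sigma> * (K + beta + (if snd \<sigma> \<noteq> [] then ?excess \<sigma> else 0))
        = (K + beta) * pmf p \<sigma> + (if snd \<sigma> \<noteq> [] then pmf p \<sigma> * ?excess \<sigma> else 0)" for \<sigma>
      by (simp add: algebra_simps)
    then show ?thesis
      by (simp only: sum.distrib sum.inter_filter[OF fin] flip: sum_distrib_left)
        (simp add: sum_pmf_eq_1[OF fin])
  qed
  finally show ?thesis by simp
qed

lemma hard_rounds_normalize:
  assumes online: "online_problem I V C" and fin: "\<forall>\<sigma>\<in>I. finite {ys. valid_out V \<sigma> ys}"
    and "\<exists>D. det_alg I V D"
    and X: "finite X" "X \<noteq> {}" "\<And>xs. xs \<in> X \<Longrightarrow> xs \<noteq> []" "\<And>xs. xs \<in> X \<Longrightarrow> (s, xs) \<in> I"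
    and w: "\<And>xs. xs \<in> X \<Longrightarrow> 0 < w xs"
    and hard: "\<And>D. det_alg I V D \<Longrightarrow>
      0 \<le> (\<Sum>xs\<in>X. w xs * (C (s, xs) (run_det D (s, xs)) - (a * OPT V C (s, xs) + beta)))"
  shows "\<exists>Mx. hard_rounds I V C s X (\<lambda>xs. w xs / sum w X)
    (a * (\<Sum>xs\<in>X. w xs / sum w X * OPT V C (s, xs)) + beta) Mx"
proof -
  let ?q = "\<lambda>xs. w xs / sum w X"
  define Mx where "Mx = Max (insert 0 (\<Union>xs\<in>X. C (s, xs) ` {ys. valid_out V (s, xs) ys}))"
  have W: "0 < sum w X" using w X(1,2) by (intro sum_pos) auto
  have q_sum: "sum ?q X = 1" using W by (simp flip: sum_divide_distrib)
  have "a * (\<Sum>xs\<in>X. ?q xs * OPT V C (s, xs)) + beta \<le> (\<Sum>xs\<in>X. ?q xs * C (s, xs) (run_det D (s, xs)))"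
    if D: "det_alg I V D" for D
  proof -
    let ?excess = "\<lambda>xs. C (s, xs) (run_det D (s, xs)) - (a * OPT V C (s, xs) + beta)"
    have "(\<Sum>xs\<in>X. ?q xs * ?excess xs) = (\<Sum>xs\<in>X. w xs * ?excess xs) / sum w X"
      by (simp add: sum_divide_distrib)
    also have "\<dots> \<ge> 0" using hard[OF D] W by simp
    also have "(\<Sum>xs\<in>X. ?q xs * ?excess xs) = (\<Sum>xs\<in>X. ?q xs * C (s, xs) (run_det D (s, xs)))
        - (a * (\<Sum>xs\<in>X. ?q xs * OPT V C (s, xs)) + beta * sum ?q X)"
      by (simp add: right_diff_distrib distrib_left sum_subtractf sum.distrib sum_distrib_left
          sum_distrib_right mult.left_commute mult.commute)
    finally have "0 \<le> (\<Sum>xs\<in>X. ?q xs * C (s, xs) (run_det D (s, xs)))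
        - (a * (\<Sum>xs\<in>X. ?q xs * OPT V C (s, xs)) + beta * sum ?q X)" .
    then show ?thesis using q_sum by simp
  qed
  moreover have "C (s, xs) (run_det D (s, xs)) \<le> Mx" if "det_alg I V D" "xs \<in> X" for D xs
  proof -
    have "C (s, xs) (run_det D (s, xs)) \<in> C (s, xs) ` {ys. valid_out V (s, xs) ys}"
      using that X(4) unfolding det_alg_def by auto
    then show ?thesis unfolding Mx_def using that(2) X(1,4) fin by (intro Max_ge) auto
  qed
  ultimately show ?thesis
    using assms W q_sum by (intro exI[of _ Mx] hard_rounds.intro) (auto intro: less_imp_le)
qed

lemma exists_hard_rounds:
  fixes p :: "('s,'x) inp pmf"
  assumes online: "online_problem I V C" and fin: "\<forall>\<sigma>\<in>I. finite {ys. valid_out V \<sigma> ys}"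
    and p: "finite (set_pmf p)" "set_pmf p \<subseteq> I" and D0: "\<exists>D. det_alg I V D"
    and hard: "\<And>D. det_alg I V D \<Longrightarrow> c1 * measure_pmf.expectation p (OPT V C) + alpha
      \<le> measure_pmf.expectation p (\<lambda>\<sigma>. C \<sigma> (run_det D \<sigma>))"
    and empty_bound: "\<And>\<sigma>. \<sigma> \<in> I \<Longrightarrow> snd \<sigma> = [] \<Longrightarrow> (1 - c1) * OPT V C \<sigma> \<le> K"
    and bound: "\<And>\<sigma>. \<sigma> \<in> I \<Longrightarrow> (a - c1) * OPT V C \<sigma> \<le> K"
    and beta: "0 \<le> beta" "K + beta < alpha"
  obtains s X q Mx where "hard_rounds I V C s X q (a * (\<Sum>xs\<in>X. q xs * OPT V C (s, xs)) + beta) Mx"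
proof -
  let ?Sn = "{\<sigma>\<in>set_pmf p. snd \<sigma> \<noteq> []}"
  let ?w = "\<lambda>\<sigma> ys. pmf p \<sigma> * (C \<sigma> ys - (a * OPT V C \<sigma> + beta))"
  have pos: "0 < (\<Sum>\<sigma>\<in>?Sn. ?w \<sigma> (run_det D \<sigma>))" if "det_alg I V D" for D
  proof -
    have "alpha - (K + beta) \<le> (\<Sum>\<sigma>\<in>?Sn. ?w \<sigma> (run_det D \<sigma>))"
      by (rule excess_on_nonempty_inputs_ge[OF p(1) hard[OF that]])
        (use empty_bound bound beta p(2) in auto)
    then show ?thesis using beta(2) by linarith
  qed
  have "\<exists>s. {\<sigma>\<in>?Sn. fst \<sigma> = s} \<noteq> {} \<and>
      (\<forall>D. det_alg I V D \<longrightarrow> 0 \<le> (\<Sum>\<sigma>\<in>{\<sigma>\<in>?Sn. fst \<sigma> = s}. ?w \<sigma> (run_det D \<sigma>)))"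
    by (rule exists_initial_state_sum_nonneg[where w = ?w, OF _ D0 pos]) (use p(1) in simp)
  then obtain s where s: "{\<sigma>\<in>?Sn. fst \<sigma> = s} \<noteq> {}"
    "\<And>D. det_alg I V D \<Longrightarrow> 0 \<le> (\<Sum>\<sigma>\<in>{\<sigma>\<in>?Sn. fst \<sigma> = s}. ?w \<sigma> (run_det D \<sigma>))"
    by blast
  define X where "X = {xs. (s, xs) \<in> set_pmf p \<and> xs \<noteq> []}"
  have block: "{\<sigma>\<in>?Sn. fst \<sigma> = s} = Pair s ` X" unfolding X_def by force
  have "finite X"
    using p(1) finite_imageD[of "Pair s" X] unfolding block[symmetric] by (auto simp: inj_on_def)
  moreover have "X \<noteq> {}" using s(1) unfolding block by blast
  moreover have "0 \<le> (\<Sum>xs\<in>X. ?w (s, xs) (run_det D (s, xs)))" if "det_alg I V D" for D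
    using s(2)[OF that] unfolding block by (subst (asm) sum.reindex) (auto simp: inj_on_def)
  ultimately have "\<exists>Mx. hard_rounds I V C s X (\<lambda>xs. pmf p (s, xs) / (\<Sum>xs\<in>X. pmf p (s, xs)))
      (a * (\<Sum>xs\<in>X. pmf p (s, xs) / (\<Sum>xs\<in>X. pmf p (s, xs)) * OPT V C (s, xs)) + beta) Mx"
    using p(2) by (intro hard_rounds_normalize[OF online fin D0]) (auto simp: X_def pmf_positive)
  then show ?thesis using that by blast
qed

locale hard_repeated = hard_rounds I V C s X q L Mx + repetition_reduction I V C g k1 k2 k3
  for I :: "('s,'x) inp set" and V :: "('s,'x) inp \<Rightarrow> nat \<Rightarrow> 'y set"
    and C :: "('s,'x) inp \<Rightarrow> 'y list \<Rightarrow> real"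
    and s X q L Mx g k1 k2 k3
begin

text \<open>Cut off after \<open>B\<close> bits, the actual tape is one of the \<open>2^B\<close> tapes, so the sum over all tapes is
  a soft minimum over the simulations of the deterministic algorithms \<open>ans A \<phi>\<close>.\<close>
lemma exp_advice_cost_le_sum_tapes:
  assumes A: "adv_alg I V b A" and r: "1 \<le> r" "xss \<in> tuples X r"
    and B: "bits_read A (g (s, xss)) \<le> B" and t: "0 < t"
  shows "exp (- t * (C (g (s, xss)) (run_adv A (g (s, xss))) + k2 * real r))
      \<le> (\<Sum>\<phi>\<in>tapes B. exp (- t * rounds_cost C (sim (ans A \<phi>)) s xss))"
proof -
  define \<phi> where "\<phi> = (\<lambda>k. k < B \<and> orc A (g (s, xss)) k)"
  have det: "det_alg I V (ans A \<phi>)" using A unfolding adv_alg_def by blast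
  have "rounds_cost C (sim (ans A \<phi>)) s xss \<le> C (g (s, xss)) (run_adv A (g (s, xss))) + k2 * real r"
    using cost_star_sim_le[OF det tuples_in_I_star[OF r]] r(2)
    unfolding cost_star_run_star \<phi>_def run_adv_truncated_tape[OF A B] by (simp add: tuples_def)
  then have "exp (- t * (C (g (s, xss)) (run_adv A (g (s, xss))) + k2 * real r))
      \<le> exp (- t * rounds_cost C (sim (ans A \<phi>)) s xss)"
    using t by simp
  also have "\<dots> \<le> (\<Sum>\<phi>\<in>tapes B. exp (- t * rounds_cost C (sim (ans A \<phi>)) s xss))"
    unfolding \<phi>_def by (intro member_le_sum truncated_tape_in_tapes finite_tapes) auto
  finally show ?thesis .
qed

lemma iid_exp_advice_cost_ge:
  assumes A: "adv_alg I V b A" and r: "1 \<le> r" and t: "0 < t"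
    and B: "\<And>xss. xss \<in> tuples X r \<Longrightarrow> bits_read A (g (s, xss)) \<le> B"
  shows "real r * (L - t * Mx\<^sup>2 / 2) - real B * ln 2 / t - k2 * real r
      \<le> iid_exp X q r (\<lambda>xss. C (g (s, xss)) (run_adv A (g (s, xss))))"
proof -
  let ?F = "\<lambda>xss. C (g (s, xss)) (run_adv A (g (s, xss)))"
  let ?\<theta> = "exp (- t * L + t\<^sup>2 * Mx\<^sup>2 / 2)"
  have "iid_exp X q r (\<lambda>xss. - t * (?F xss + k2 * real r)) = - t * (iid_exp X q r ?F + k2 * real r)"
    using iid_exp_add[of X q r "\<lambda>xss. - t * ?F xss" "\<lambda>_. - t * (k2 * real r)"]
      iid_exp_cmult[of X q r "- t" ?F] iid_exp_const[OF finite_X q_sum]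
    by (simp add: algebra_simps)
  then have "exp (- t * (iid_exp X q r ?F + k2 * real r)) = exp (iid_exp X q r (\<lambda>xss. - t * (?F xss + k2 * real r)))"
    by simp
  also have "\<dots> \<le> iid_exp X q r (\<lambda>xss. exp (- t * (?F xss + k2 * real r)))"
    by (intro exp_iid_exp_le finite_X X_nonempty q_nonneg q_sum)
  also have "\<dots> \<le> iid_exp X q r (\<lambda>xss. \<Sum>\<phi>\<in>tapes B. exp (- t * rounds_cost C (sim (ans A \<phi>)) s xss))"
    by (intro iid_exp_mono q_nonneg exp_advice_cost_le_sum_tapes[OF A r _ B t] B)
  also have "\<dots> = (\<Sum>\<phi>\<in>tapes B. iid_exp X q r (\<lambda>xss. exp (- t * rounds_cost C (sim (ans A \<phi>)) s xss)))"
    by (rule iid_exp_sum)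
  also have "\<dots> \<le> (\<Sum>\<phi>\<in>tapes B. ?\<theta> ^ r)"
    using A unfolding adv_alg_def
    by (intro sum_mono iid_exp_exp_rounds_cost_le det_alg_star_sim t) blast
  also have "\<dots> \<le> 2 ^ B * ?\<theta> ^ r"
    using card_tapes_le[of B] by (simp add: mult_right_mono flip: of_nat_le_iff)
  also have "\<dots> = exp (real B * ln 2 + real r * (- t * L + t\<^sup>2 * Mx\<^sup>2 / 2))"
    by (simp add: exp_add exp_of_nat_mult)
  finally have "- t * (iid_exp X q r ?F + k2 * real r) \<le> real B * ln 2 + real r * (- t * L + t\<^sup>2 * Mx\<^sup>2 / 2)"
    by simp
  then show ?thesis using t by (simp add: field_simps power2_eq_square)
qed

lemma iid_exp_advice_cost_le_if_competitive:
  assumes M: "rand_alg I V C b M"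
    and comp: "\<forall>\<sigma>\<in>I. 0 \<le> c1 * OPT V C \<sigma> + \<alpha> \<and> exp_cost C M \<sigma> \<le> ennreal (c1 * OPT V C \<sigma> + \<alpha>)"
    and a: "c1 \<le> a" "0 \<le> a" and r: "1 \<le> r"
    and low: "\<And>A. A \<in> space M \<Longrightarrow> lower \<le> iid_exp X q r (\<lambda>xss. C (g (s, xss)) (run_adv A (g (s, xss))))"
  shows "lower \<le> a * real r * ((\<Sum>xs\<in>X. q xs * OPT V C (s, xs)) + k3) + \<alpha>"
proof -
  define U where "U xss = a * ((\<Sum>i<length xss. OPT V C (s, xss ! i)) + k3 * real r) + \<alpha>" for xss
  have in_I: "g (s, xss) \<in> I" if "xss \<in> tuples X r" for xss
    using g_in_I tuples_in_I_star[OF r that] by blast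
  have competitive_le_U: "c1 * OPT V C (g (s, xss)) + \<alpha> \<le> U xss" if xss: "xss \<in> tuples X r" for xss
  proof -
    have "OPT V C (g (s, xss)) \<le> OPT_star V C (s, xss) + k3 * real r"
      using OPT_g_le[OF tuples_in_I_star[OF r xss]] xss by (simp add: tuples_def)
    also have "\<dots> \<le> (\<Sum>i<length xss. OPT V C (s, xss ! i)) + k3 * real r"
      using OPT_star_le_sum_OPT[OF online ballI[OF finite_outputs]] rounds_in_I xss
      by (auto simp: tuples_def)
    finally have "a * OPT V C (g (s, xss)) \<le> a * ((\<Sum>i<length xss. OPT V C (s, xss ! i)) + k3 * real r)"
      using a(2) by (rule mult_left_mono)
    moreover have "c1 * OPT V C (g (s, xss)) \<le> a * OPT V C (g (s, xss))"
      using a(1) OPT_nonneg[OF online in_I[OF xss]] by (rule mult_right_mono)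
    ultimately show ?thesis unfolding U_def by linarith
  qed
  have "lower \<le> iid_exp X q r U"
    unfolding iid_exp_def
  proof (rule le_weighted_sum_if_nn_integral_le[where F = "\<lambda>A xss. C (g (s, xss)) (run_adv A (g (s, xss)))"])
    show "prob_space M" using M unfolding rand_alg_def by blast
    show "finite (tuples X r)" using finite_X by (rule finite_tuples)
  next
    fix A assume "A \<in> space M"
    then show "lower \<le> (\<Sum>xss\<in>tuples X r. prod_list (map q xss) * C (g (s, xss)) (run_adv A (g (s, xss))))"
      using low[OF \<open>A \<in> space M\<close>] by (simp only: iid_exp_def)
  next
    fix A xss assume A: "A \<in> space M" and xss: "xss \<in> tuples X r"
    have "adv_alg I V b A" using M A unfolding rand_alg_def by blast
    then have "det_alg I V (ans A (orc A (g (s, xss))))" unfolding adv_alg_def by blast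
    then have "valid_out V (g (s, xss)) (run_adv A (g (s, xss)))"
      using in_I[OF xss] unfolding det_alg_def run_adv_def by blast
    then show "0 \<le> C (g (s, xss)) (run_adv A (g (s, xss)))"
      using online in_I[OF xss] unfolding online_problem_def by blast
  next
    fix xss assume xss: "xss \<in> tuples X r"
    show "0 \<le> prod_list (map q xss)" using q_nonneg xss by (rule prod_list_nonneg_tuples)
    show "(\<lambda>A. C (g (s, xss)) (run_adv A (g (s, xss)))) \<in> borel_measurable M"
      using M in_I[OF xss] unfolding rand_alg_def by blast
    have "exp_cost C M (g (s, xss)) \<le> ennreal (c1 * OPT V C (g (s, xss)) + \<alpha>)"
      using comp in_I[OF xss] by blast
    also have "\<dots> \<le> ennreal (U xss)" using competitive_le_U[OF xss] by (rule ennreal_leI)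
    finally show "(\<integral>\<^sup>+A. ennreal (C (g (s, xss)) (run_adv A (g (s, xss)))) \<partial>M) \<le> ennreal (U xss)"
      unfolding exp_cost_def .
    have "0 \<le> c1 * OPT V C (g (s, xss)) + \<alpha>" using comp in_I[OF xss] by blast
    then show "0 \<le> U xss" using competitive_le_U[OF xss] by linarith
  qed
  also have "iid_exp X q r U = a * real r * ((\<Sum>xs\<in>X. q xs * OPT V C (s, xs)) + k3) + \<alpha>"
    unfolding U_def iid_exp_add iid_exp_cmult iid_exp_const[OF finite_X q_sum]
    using iid_exp_sum_rounds[OF finite_X q_sum, of r "\<lambda>xs. OPT V C (s, xs)"]
    by (simp add: algebra_simps)
  finally show ?thesis .
qed

text \<open>The surplus \<open>a * k3 + k2 + 1\<close> of a hard round pays for the constants of the reduction and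
  leaves \<open>1\<close> per round, of which concentration costs \<open>t * Mx\<^sup>2 / 2 \<le> 1 / 2\<close>.\<close>
lemma rounds_le_advice:
  assumes M: "rand_alg I V C b M"
    and comp: "\<forall>\<sigma>\<in>I. 0 \<le> c1 * OPT V C \<sigma> + \<alpha> \<and> exp_cost C M \<sigma> \<le> ennreal (c1 * OPT V C \<sigma> + \<alpha>)"
    and a: "c1 \<le> a" "0 \<le> a"
    and L: "L = a * (\<Sum>xs\<in>X. q xs * OPT V C (s, xs)) + (a * k3 + k2 + 1)"
    and r: "1 \<le> r"
  shows "real r \<le> 2 * (Mx\<^sup>2 + 1) * ln 2 * real (b (r * (Max (length ` X) + nat \<lceil>k1\<rceil>))) + 2 * \<alpha>"
proof -
  define t where "t = 1 / (Mx\<^sup>2 + 1)"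
  define B where "B = b (r * (Max (length ` X) + nat \<lceil>k1\<rceil>))"
  have t: "0 < t" "t * Mx\<^sup>2 \<le> 1" unfolding t_def by (auto simp: add_pos_nonneg field_simps)
  have bits: "bits_read A (g (s, xss)) \<le> B" if "A \<in> space M" "xss \<in> tuples X r" for A xss
  proof -
    have "\<forall>xs\<in>set xss. length xs \<le> Max (length ` X)"
      using that(2) finite_X by (auto simp: tuples_def)
    then have "length (snd (g (s, xss))) \<le> r * (Max (length ` X) + nat \<lceil>k1\<rceil>)"
      using length_g_le[OF tuples_in_I_star[OF r that(2)]] that(2) by (auto simp: tuples_def)
    then show ?thesis
      using M that g_in_I[OF tuples_in_I_star[OF r that(2)]] unfolding rand_alg_def adv_alg_def B_def
      by blast
  qed
  have "real r * (L - t * Mx\<^sup>2 / 2) - real B * ln 2 / t - k2 * real r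
      \<le> a * real r * ((\<Sum>xs\<in>X. q xs * OPT V C (s, xs)) + k3) + \<alpha>"
    using M bits unfolding rand_alg_def
    by (intro iid_exp_advice_cost_le_if_competitive[OF M comp a r] iid_exp_advice_cost_ge[OF _ r t(1)])
      auto
  then have "real r * (1 - t * Mx\<^sup>2 / 2) \<le> real B * ln 2 / t + \<alpha>"
    unfolding L by (simp add: algebra_simps)
  moreover have "real r / 2 \<le> real r * (1 - t * Mx\<^sup>2 / 2)"
  proof -
    have "1 / 2 \<le> 1 - t * Mx\<^sup>2 / 2" using t(2) by simp
    then show ?thesis using mult_left_mono[of "1 / 2" _ "real r"] by simp
  qed
  moreover have "real B * ln 2 / t = (Mx\<^sup>2 + 1) * ln 2 * real B" unfolding t_def by simp
  ultimately show ?thesis unfolding B_def[symmetric] by linarith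
qed

end

lemma (in repetition_reduction) sublinear_advice_not_competitive:
  fixes M :: "('s,'x,'y) adv_alg measure"
  assumes online: "online_problem I V C"
    and small: "(\<lambda>n. real (b n)) \<in> o(\<lambda>n. real n)" and M: "rand_alg I V C b M"
    and hard: "\<And>\<alpha>. \<exists>p :: ('s,'x) inp pmf. finite (set_pmf p) \<and> set_pmf p \<subseteq> I \<and>
      (\<forall>D. det_alg I V D \<longrightarrow> c1 * measure_pmf.expectation p (OPT V C) + \<alpha>
         \<le> measure_pmf.expectation p (\<lambda>\<sigma>. C \<sigma> (run_det D \<sigma>)))"
  shows "\<not> competitive I V C M c1"
proof
  assume "competitive I V C M c1"
  then obtain \<alpha> where comp:
    "\<forall>\<sigma>\<in>I. 0 \<le> c1 * OPT V C \<sigma> + \<alpha> \<and> exp_cost C M \<sigma> \<le> ennreal (c1 * OPT V C \<sigma> + \<alpha>)"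
    unfolding competitive_def by blast
  \<comment> \<open>\<open>c1\<close> may be negative, but \<open>OPT\<close> of \<open>g\<close> is only bounded from above, so scale by \<open>a \<ge> 0\<close>\<close>
  define a where "a = max c1 0"
  define \<beta> where "\<beta> = a * k3 + k2 + 1"
  have prob: "prob_space M" using M unfolding rand_alg_def by blast
  have "0 \<le> \<beta>" unfolding \<beta>_def a_def using k2_nonneg k3_nonneg by simp
  moreover have "\<bar>\<alpha>\<bar> + \<beta> < \<bar>\<alpha>\<bar> + \<beta> + 1" by simp
  moreover obtain p where "finite (set_pmf p)" "set_pmf p \<subseteq> I" "\<And>D. det_alg I V D \<Longrightarrow>
      c1 * measure_pmf.expectation p (OPT V C) + (\<bar>\<alpha>\<bar> + \<beta> + 1)
        \<le> measure_pmf.expectation p (\<lambda>\<sigma>. C \<sigma> (run_det D \<sigma>))"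
    using hard by blast
  ultimately obtain s X q Mx where "hard_rounds I V C s X q (a * (\<Sum>xs\<in>X. q xs * OPT V C (s, xs)) + \<beta>) Mx"
    using exists_hard_rounds[OF online ballI[OF finite_outputs], where K = "\<bar>\<alpha>\<bar>" and a = a]
      rand_alg_imp_det_alg_exists[OF M] competitive_OPT_bounds[OF prob comp, folded a_def]
    by blast
  then interpret hard_repeated I V C s X q "a * (\<Sum>xs\<in>X. q xs * OPT V C (s, xs)) + \<beta>" Mx g k1 k2 k3
    by (intro hard_repeated.intro repetition_reduction_axioms)
  have "0 < Max (length ` X) + nat \<lceil>k1\<rceil>" using Max_length_pos by simp
  from smallo_exists_exceeding[OF small this, of "2 * (Mx\<^sup>2 + 1) * ln 2" "2 * \<alpha>"]
  obtain r where "1 \<le> r"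
    "2 * (Mx\<^sup>2 + 1) * ln 2 * real (b (r * (Max (length ` X) + nat \<lceil>k1\<rceil>))) + 2 * \<alpha> < real r"
    by blast
  moreover have "c1 \<le> a" "0 \<le> a" unfolding a_def by simp_all
  ultimately show False
    using rounds_le_advice[OF M comp _ _ _ \<open>1 \<le> r\<close>] unfolding \<beta>_def by fastforce
qed

theorem theorem1:
  fixes I :: "('s,'x) inp set"
    and V :: "('s,'x) inp \<Rightarrow> nat \<Rightarrow> 'y set"
    and C :: "('s,'x) inp \<Rightarrow> 'y list \<Rightarrow> real"
    and c :: real
  assumes "online_problem I V C"
    and "repeatable I V C"
    and "\<forall>\<epsilon>>0. \<forall>\<alpha>::real. \<exists>p :: ('s,'x) inp pmf.
           finite (set_pmf p) \<and> set_pmf p \<subseteq> I \<and>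
           (\<forall>D. det_alg I V D \<longrightarrow>
              measure_pmf.expectation p (\<lambda>\<sigma>. C \<sigma> (run_det D \<sigma>))
                \<ge> (c - \<epsilon>) * measure_pmf.expectation p (OPT V C) + \<alpha>)"
  shows "\<forall>(b :: nat \<Rightarrow> nat) (M :: ('s,'x,'y) adv_alg measure).
           (\<lambda>n. real (b n)) \<in> o(\<lambda>n. real n) \<longrightarrow> rand_alg I V C b M \<longrightarrow>
           ratio_at_least I V C M c"
proof (intro allI impI)
  fix b :: "nat \<Rightarrow> nat" and M :: "('s,'x,'y) adv_alg measure"
  assume small: "(\<lambda>n. real (b n)) \<in> o(\<lambda>n. real n)" and M: "rand_alg I V C b M"
  obtain g k1 k2 k3 where "repetition_reduction I V C g k1 k2 k3"
    using assms(2) by (rule repeatable_imp_repetition_reduction)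
  then interpret repetition_reduction I V C g k1 k2 k3 .
  show "ratio_at_least I V C M c" unfolding ratio_at_least_def
  proof (intro allI impI)
    fix c1 assume "c1 < c"
    then have "\<exists>p :: ('s,'x) inp pmf. finite (set_pmf p) \<and> set_pmf p \<subseteq> I \<and>
      (\<forall>D. det_alg I V D \<longrightarrow> c1 * measure_pmf.expectation p (OPT V C) + \<alpha>
         \<le> measure_pmf.expectation p (\<lambda>\<sigma>. C \<sigma> (run_det D \<sigma>)))" for \<alpha>
      using assms(3)[rule_format, of "c - c1" \<alpha>] by auto
    then show "\<not> competitive I V C M c1"
      by (rule sublinear_advice_not_competitive[OF assms(1) small M])
  qed
qed

end
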